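(* Suppose Assumption 1 holds. Let $(\boldsymbol\lambda^*,\boldsymbol\gamma^* )\in\mathbb R^K\times\mathbb R^K$ be a minimizer of $$(\boldsymbol\lambda,\boldsymbol\gamma)\mapsto \langle\boldsymbol\lambda,\boldsymbol\alpha\rangle+\sum_{s=1}^K\mathbb E\big[(G(X,s,\boldsymbol\lambda,\boldsymbol\gamma))_+\,\big|\,S=s\big].$$ Set $c_{\boldsymbol\gamma^*,s}=\frac12\big(\frac{\bar\alpha\gamma^*_s}{\alpha_s p_s}-\langle\mathbf 1,\boldsymbol\gamma^*\rangle\big)$ and define, for $(x,s)\in\mathbb R^d\times[K]$, $$g^*(x,s)=\begin{cases} r & \text{if } G(x,s,\boldsymbol\lambda^*,\boldsymbol\gamma^* )\le 0,\\ \mathbb 1\big(\eta(x,s)\ge \tfrac12+c_{\boldsymbol\gamma^*,s}\big) & \text{otherwise.}\end{cases}$$ Then $g^*$ is an optimal classifier for problem (DPWA): it satisfies the constraints of (DPWA) and minimizes $\mathcal R$ among all classifiers with abstention satisfying them.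
   Context: Let $(X,S,Y)$ be a random triple with law $\mathbb P$ on $\mathbb R^d\times[K]\times\{0,1\}$, $[K]=\{1,\dots,K\}$. Write $p_s=\mathbb P(S=s)>0$ and $\eta(x,s)=\mathbb E[Y\mid X=x,S=s]$. A classifier with abstention is a measurable map $g:\mathbb R^d\times[K]\to\{0,1,r\}$, where $r$ means "reject". Define $\mathcal R(g)=\mathbb P(Y\neq g(X,S)\mid g(X,S)\neq r)$, $\mathrm{NA}_s(g)=\mathbb P(g(X,S)\neq r\mid S=s)$, $\mathrm{PT}_s(g)=\mathbb P(g(X,S)=1\mid S=s,\,g(X,S)\neq r)$, $\mathrm{PT}(g)=\mathbb P(g(X,S)=1\mid g(X,S)\neq r)$. Fix $\boldsymbol\alpha=(\alpha_1,\dots,\alpha_K)\in(0,1]^K$ and set $\bar\alpha=\sum_s p_s\alpha_s$. Problem (DPWA): minimize $\mathcal R(g)$ over classifiers with abstention subject to $\mathrm{NA}_s(g)=\alpha_s$ and $\mathrm{PT}_s(g)=\mathrm{PT}(g)$ for all $s\in[K]$. $\mathbf 1\in\mathbb R^K$ is the all-ones vector, $e_s$ the $s$-th standard basis vector, $(a)_+=\max(a,0)$. Assumption 1: for every $s\in[K]$, the conditional law of $\eta(X,S)$ given $S=s$ is non-atomic. Define $$G(x,s,\boldsymbol\lambda,\boldsymbol\gamma)=\Big|\tfrac{p_s}{2\bar\alpha}\big(1-2\eta(x,s)-\langle\boldsymbol\gamma,\mathbf 1\rangle\big)+\tfrac{\langle\boldsymbol\gamma,e_s\rangle}{2\alpha_s}\Big|-\tfrac{p_s}{2\bar\alpha}\big(1-\langle\boldsymbol\gamma,\mathbf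 1\rangle\big)-\langle\boldsymbol\lambda,e_s\rangle-\tfrac{\langle\boldsymbol\gamma,e_s\rangle}{2\alpha_s}.$$ *)

theory Defs
  imports "HOL-Probability.Probability"
begin

datatype outp = L0 | L1 | Rej

definition ev :: "'w measure \<Rightarrow> ('w \<Rightarrow> bool) \<Rightarrow> 'w set" where
  "ev M P = {w \<in> space M. P w}"

definition cprob :: "'w measure \<Rightarrow> 'w set \<Rightarrow> 'w set \<Rightarrow> real" where
  "cprob M A B = measure M (A \<inter> B) / measure M B"

definition psz :: "'w measure \<Rightarrow> ('w \<Rightarrow> nat) \<Rightarrow> nat \<Rightarrow> real" where
  "psz M S s = measure M (ev M (\<lambda>w. S w = s))"

definition abar :: "'w measure \<Rightarrow> ('w \<Rightarrow> nat) \<Rightarrow> nat \<Rightarrow> (nat \<Rightarrow> real) \<Rightarrow> real" where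
  "abar M S K \<alpha> = (\<Sum>s=1..K. psz M S s * \<alpha> s)"

definition risk :: "'w measure \<Rightarrow> ('w \<Rightarrow> 'x) \<Rightarrow> ('w \<Rightarrow> nat) \<Rightarrow> ('w \<Rightarrow> real)
    \<Rightarrow> ('x \<Rightarrow> nat \<Rightarrow> outp) \<Rightarrow> real" where
  "risk M X S Y g = cprob M
     (ev M (\<lambda>w. (g (X w) (S w) = L1 \<and> Y w \<noteq> 1) \<or> (g (X w) (S w) = L0 \<and> Y w \<noteq> 0)))
     (ev M (\<lambda>w. g (X w) (S w) \<noteq> Rej))"

definition NA :: "'w measure \<Rightarrow> ('w \<Rightarrow> 'x) \<Rightarrow> ('w \<Rightarrow> nat)
    \<Rightarrow> ('x \<Rightarrow> nat \<Rightarrow> outp) \<Rightarrow> nat \<Rightarrow> real" where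
  "NA M X S g s = cprob M (ev M (\<lambda>w. g (X w) (S w) \<noteq> Rej)) (ev M (\<lambda>w. S w = s))"

definition PTs :: "'w measure \<Rightarrow> ('w \<Rightarrow> 'x) \<Rightarrow> ('w \<Rightarrow> nat)
    \<Rightarrow> ('x \<Rightarrow> nat \<Rightarrow> outp) \<Rightarrow> nat \<Rightarrow> real" where
  "PTs M X S g s = cprob M (ev M (\<lambda>w. g (X w) (S w) = L1))
      (ev M (\<lambda>w. S w = s \<and> g (X w) (S w) \<noteq> Rej))"

definition PT :: "'w measure \<Rightarrow> ('w \<Rightarrow> 'x) \<Rightarrow> ('w \<Rightarrow> nat)
    \<Rightarrow> ('x \<Rightarrow> nat \<Rightarrow> outp) \<Rightarrow> real" where
  "PT M X S g = cprob M (ev M (\<lambda>w. g (X w) (S w) = L1)) (ev M (\<lambda>w. g (X w) (S w) \<noteq> Rej))"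

definition is_classifier :: "('x::topological_space \<Rightarrow> nat \<Rightarrow> outp) \<Rightarrow> bool" where
  "is_classifier g \<longleftrightarrow>
     (\<lambda>(x, s). g x s) \<in> measurable (borel \<Otimes>\<^sub>M count_space UNIV) (count_space UNIV)"

definition DPWA_feasible :: "'w measure \<Rightarrow> ('w \<Rightarrow> 'x::topological_space) \<Rightarrow> ('w \<Rightarrow> nat)
    \<Rightarrow> nat \<Rightarrow> (nat \<Rightarrow> real) \<Rightarrow> ('x \<Rightarrow> nat \<Rightarrow> outp) \<Rightarrow> bool" where
  "DPWA_feasible M X S K \<alpha> g \<longleftrightarrow> is_classifier g \<and>
     (\<forall>s\<in>{1..K}. NA M X S g s = \<alpha> s \<and> PTs M X S g s = PT M X S g)"

definition DPWA_optimal :: "'w measure \<Rightarrow> ('w \<Rightarrow> 'x::topological_space) \<Rightarrow> ('w \<Rightarrow> nat)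
    \<Rightarrow> ('w \<Rightarrow> real) \<Rightarrow> nat \<Rightarrow> (nat \<Rightarrow> real) \<Rightarrow> ('x \<Rightarrow> nat \<Rightarrow> outp) \<Rightarrow> bool" where
  "DPWA_optimal M X S Y K \<alpha> g \<longleftrightarrow> DPWA_feasible M X S K \<alpha> g \<and>
     (\<forall>h. DPWA_feasible M X S K \<alpha> h \<longrightarrow> risk M X S Y g \<le> risk M X S Y h)"

text \<open>eta is a version of E[Y | X, S]: a measurable function of (x,s) with
  E[Y 1{(X,S) \<in> B}] = E[eta(X,S) 1{(X,S) \<in> B}] for all measurable B.\<close>
definition is_regression :: "'w measure \<Rightarrow> ('w \<Rightarrow> 'x::topological_space) \<Rightarrow> ('w \<Rightarrow> nat)
    \<Rightarrow> ('w \<Rightarrow> real) \<Rightarrow> ('x \<Rightarrow> nat \<Rightarrow> real) \<Rightarrow> bool" where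
  "is_regression M X S Y \<eta> \<longleftrightarrow>
     (\<lambda>(x, s). \<eta> x s) \<in> borel_measurable (borel \<Otimes>\<^sub>M count_space UNIV) \<and>
     integrable M (\<lambda>w. \<eta> (X w) (S w)) \<and>
     (\<forall>B \<in> sets (borel \<Otimes>\<^sub>M count_space UNIV).
        (LINT w:ev M (\<lambda>w. (X w, S w) \<in> B)|M. Y w) =
        (LINT w:ev M (\<lambda>w. (X w, S w) \<in> B)|M. \<eta> (X w) (S w)))"

definition nonatomic :: "'a measure \<Rightarrow> bool" where
  "nonatomic N \<longleftrightarrow> (\<forall>A\<in>sets N. 0 < emeasure N A \<longrightarrow>
      (\<exists>B\<in>sets N. B \<subseteq> A \<and> 0 < emeasure N B \<and> emeasure N B < emeasure N A))"

text \<open>The function G(x,s,lambda,gamma); vectors in R^K are functions on {1..K}.\<close>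
definition Gfun :: "'w measure \<Rightarrow> ('w \<Rightarrow> nat) \<Rightarrow> nat \<Rightarrow> (nat \<Rightarrow> real)
    \<Rightarrow> ('x \<Rightarrow> nat \<Rightarrow> real) \<Rightarrow> 'x \<Rightarrow> nat \<Rightarrow> (nat \<Rightarrow> real) \<Rightarrow> (nat \<Rightarrow> real) \<Rightarrow> real" where
  "Gfun M S K \<alpha> \<eta> x s lam gam =
     (let p = psz M S s; ab = abar M S K \<alpha>; sg = (\<Sum>t=1..K. gam t) in
      \<bar>p / (2 * ab) * (1 - 2 * \<eta> x s - sg) + gam s / (2 * \<alpha> s)\<bar>
      - p / (2 * ab) * (1 - sg) - lam s - gam s / (2 * \<alpha> s))"

definition dual_obj :: "'w measure \<Rightarrow> ('w \<Rightarrow> 'x) \<Rightarrow> ('w \<Rightarrow> nat) \<Rightarrow> nat \<Rightarrow> (nat \<Rightarrow> real)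
    \<Rightarrow> ('x \<Rightarrow> nat \<Rightarrow> real) \<Rightarrow> (nat \<Rightarrow> real) \<Rightarrow> (nat \<Rightarrow> real) \<Rightarrow> real" where
  "dual_obj M X S K \<alpha> \<eta> lam gam =
     (\<Sum>s=1..K. lam s * \<alpha> s) +
     (\<Sum>s=1..K. (LINT w:ev M (\<lambda>w. S w = s)|M. max 0 (Gfun M S K \<alpha> \<eta> (X w) s lam gam))
                 / psz M S s)"

definition gstar :: "'w measure \<Rightarrow> ('w \<Rightarrow> nat) \<Rightarrow> nat \<Rightarrow> (nat \<Rightarrow> real)
    \<Rightarrow> ('x \<Rightarrow> nat \<Rightarrow> real) \<Rightarrow> (nat \<Rightarrow> real) \<Rightarrow> (nat \<Rightarrow> real) \<Rightarrow> 'x \<Rightarrow> nat \<Rightarrow> outp" where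
  "gstar M S K \<alpha> \<eta> lam gam x s =
     (let c = (abar M S K \<alpha> * gam s / (\<alpha> s * psz M S s) - (\<Sum>t=1..K. gam t)) / 2 in
      if Gfun M S K \<alpha> \<eta> x s lam gam \<le> 0 then Rej
      else if \<eta> x s \<ge> 1/2 + c then L1 else L0)"

end

theory Submission
  imports Defs
begin

(* The dual objective is <lam, alpha> plus the integral of hinge functions max 0 (|A| - B),
   where A is affine in eta(X,S) and A, B are affine in the multipliers (lam, gam).
   Assumption 1 makes eta(X,S) avoid the kinks of these hinges almost surely, so by dominated
   convergence the dual objective has one-sided directional derivatives, given by integrals
   over the decision regions of gstar.  At a minimiser they are nonnegative; in the directions
   +-e_s of lam and of gam this yields exactly NA_s(gstar) = alpha_s and PT_s(gstar) = PT(gstar).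
   Optimality is then weak duality: for feasible h the constraints turn alpha-bar * R(h)
   + <lam, alpha> into the integral of a Lagrangian, whose integrand gstar minimises pointwise. *)

lemma hinge_abs_diff_le:
  fixes a b a' b' :: real
  shows "\<bar>max 0 (\<bar>a'\<bar> - b') - max 0 (\<bar>a\<bar> - b)\<bar> \<le> \<bar>a' - a\<bar> + \<bar>b' - b\<bar>"
proof -
  have "\<bar>max 0 x - max 0 y\<bar> \<le> \<bar>x - y\<bar>" for x y :: real by (simp add: max_def)
  moreover have "\<bar>(\<bar>a'\<bar> - b') - (\<bar>a\<bar> - b)\<bar> \<le> \<bar>a' - a\<bar> + \<bar>b' - b\<bar>"
    using abs_triangle_ineq3[of a' a] by linarith
  ultimately show ?thesis by (rule order_trans)
qed

lemma eventually_sgn_eq: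
  fixes f :: "'a \<Rightarrow> real"
  assumes "(f \<longlongrightarrow> l) F" "l \<noteq> 0"
  shows "\<forall>\<^sub>F x in F. sgn (f x) = sgn l"
proof (cases "0 < l")
  case True
  with order_tendstoD(1)[OF assms(1), of 0] show ?thesis by (auto elim: eventually_mono)
next
  case False
  with assms order_tendstoD(2)[OF assms(1), of 0] show ?thesis by (auto elim: eventually_mono)
qed

lemma hinge_abs_eventually_linear:
  fixes a b k m :: real
  assumes "a \<noteq> 0" "\<bar>a\<bar> \<noteq> b"
  shows "\<forall>\<^sub>F \<tau> in at_right 0. max 0 (\<bar>a + \<tau> * k\<bar> - (b + \<tau> * m)) - max 0 (\<bar>a\<bar> - b)
           = \<tau> * (if \<bar>a\<bar> \<le> b then 0 else if a \<le> 0 then - k - m else k - m)"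
proof -
  have "((\<lambda>\<tau>. a + \<tau> * k) \<longlongrightarrow> a) (at_right 0)"
    and "((\<lambda>\<tau>. \<bar>a + \<tau> * k\<bar> - (b + \<tau> * m)) \<longlongrightarrow> \<bar>a\<bar> - b) (at_right 0)"
    by (auto intro!: tendsto_eq_intros)
  from this[THEN eventually_sgn_eq] assms
  have "\<forall>\<^sub>F \<tau> in at_right 0. sgn (a + \<tau> * k) = sgn a \<and> sgn (\<bar>a + \<tau> * k\<bar> - (b + \<tau> * m)) = sgn (\<bar>a\<bar> - b)"
    by (auto intro: eventually_conj)
  then show ?thesis
    by (rule eventually_mono) (use assms in \<open>auto simp: sgn_if abs_if max_def algebra_simps split: if_splits\<close>)
qed

lemma nonatomic_singleton_null:
  assumes "nonatomic N" "{u} \<in> sets N"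
  shows "emeasure N {u} = 0"
proof (rule ccontr)
  assume "emeasure N {u} \<noteq> 0"
  then obtain B where "B \<in> sets N" "B \<subseteq> {u}" "0 < emeasure N B" "emeasure N B < emeasure N {u}"
    using assms unfolding nonatomic_def by (auto simp: zero_less_iff_neq_zero)
  then show False by (metis emeasure_empty less_irrefl subset_singletonD)
qed

lemma (in finite_measure) integral_right_derivative_nonneg:
  fixes f :: "real \<Rightarrow> 'a \<Rightarrow> real"
  assumes int: "\<And>\<tau>. 0 \<le> \<tau> \<Longrightarrow> integrable M (f \<tau>)"
    and lip: "\<And>\<tau>. 0 < \<tau> \<Longrightarrow> AE w in M. \<bar>f \<tau> w - f 0 w\<bar> \<le> \<tau> * C"
    and deriv: "AE w in M. ((\<lambda>\<tau>. (f \<tau> w - f 0 w) / \<tau>) \<longlongrightarrow> d w) (at_right 0)"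
    and d_meas: "d \<in> borel_measurable M"
    and min: "\<And>\<tau>. 0 < \<tau> \<Longrightarrow> integral\<^sup>L M (f 0) \<le> \<tau> * c + integral\<^sup>L M (f \<tau>)"
  shows "0 \<le> c + integral\<^sup>L M d"
proof -
  define \<tau> where "\<tau> n = inverse (real (Suc n))" for n
  define q where "q n w = (f (\<tau> n) w - f 0 w) / \<tau> n" for n w
  have \<tau>_pos: "0 < \<tau> n" for n
    unfolding \<tau>_def by simp
  have \<tau>_lim: "filterlim \<tau> (at_right 0) sequentially"
    unfolding \<tau>_def
    by (intro tendsto_imp_filterlim_at_right LIMSEQ_inverse_real_of_nat always_eventually) simp
  have q_meas: "q n \<in> borel_measurable M" for n
    using int[of 0] int[of "\<tau> n"] \<tau>_pos[of n] unfolding q_def by (intro borel_measurable_divide borel_measurable_diff) auto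
  have "(\<lambda>n. integral\<^sup>L M (q n)) \<longlonglongrightarrow> integral\<^sup>L M d"
  proof (rule integral_dominated_convergence[where w="\<lambda>_. C"])
    show "AE w in M. (\<lambda>n. q n w) \<longlonglongrightarrow> d w"
      using deriv by eventually_elim (unfold q_def, rule filterlim_compose[OF _ \<tau>_lim])
    show "AE w in M. norm (q n w) \<le> C" for n
      using lip[OF \<tau>_pos[of n]] by eventually_elim (use \<tau>_pos[of n] in \<open>simp add: q_def abs_divide pos_divide_le_eq mult.commute\<close>)
  qed (use q_meas d_meas in auto)
  moreover have "0 \<le> c + integral\<^sup>L M (q n)" for n
  proof -
    have "integral\<^sup>L M (q n) = (integral\<^sup>L M (f (\<tau> n)) - integral\<^sup>L M (f 0)) / \<tau> n"
      unfolding q_def using int[of 0] int[of "\<tau> n"] \<tau>_pos[of n] by simp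
    then have "0 \<le> \<tau> n * (c + integral\<^sup>L M (q n))"
      using min[OF \<tau>_pos[of n]] \<tau>_pos[of n] by (simp add: field_simps)
    then show ?thesis
      using \<tau>_pos[of n] by (simp add: zero_le_mult_iff)
  qed
  ultimately show ?thesis
    by (intro LIMSEQ_le_const[where X="\<lambda>n. c + integral\<^sup>L M (q n)"] tendsto_add tendsto_const) auto
qed

lemma sum_fun_upd_add:
  fixes f a :: "'a \<Rightarrow> 'b :: semiring_0"
  assumes "finite A" "s \<in> A"
  shows "(\<Sum>t\<in>A. (f(s := f s + x)) t * a t) = (\<Sum>t\<in>A. f t * a t) + x * a s"
proof -
  have "(\<Sum>t\<in>A. (f(s := f s + x)) t * a t) = (\<Sum>t\<in>A. f t * a t + (if t = s then x * a s else 0))"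
    by (intro sum.cong) (auto simp: ring_distribs)
  then show ?thesis
    using assms by (simp add: sum.distrib)
qed

locale dpwa_model = prob_space M for M :: "'w measure" +
  fixes X :: "'w \<Rightarrow> 'x :: topological_space" and S :: "'w \<Rightarrow> nat" and Y :: "'w \<Rightarrow> real"
    and K :: nat and \<alpha> :: "nat \<Rightarrow> real" and \<eta> :: "'x \<Rightarrow> nat \<Rightarrow> real"
    and lam gam :: "nat \<Rightarrow> real"
  assumes X_measurable: "X \<in> borel_measurable M"
    and S_measurable[measurable]: "S \<in> measurable M (count_space UNIV)"
    and Y_measurable[measurable]: "Y \<in> borel_measurable M"
    and S_range_AE: "AE w in M. S w \<in> {1..K}"
    and Y_binary_AE: "AE w in M. Y w \<in> {0, 1}"
    and psz_pos: "\<And>s. s \<in> {1..K} \<Longrightarrow> psz M S s > 0"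
    and \<alpha>_pos: "\<And>s. s \<in> {1..K} \<Longrightarrow> \<alpha> s > 0"
    and regression: "is_regression M X S Y \<eta>"
begin

abbreviation "p s \<equiv> psz M S s"
abbreviation "\<alpha>bar \<equiv> abar M S K \<alpha>"
abbreviation "sumK g \<equiv> \<Sum>t=1..K. g t"
abbreviation "gst \<equiv> gstar M S K \<alpha> \<eta> lam gam"

definition "eta_XS w = \<eta> (X w) (S w)"

definition "GA t g u = p t / (2 * \<alpha>bar) * (1 - 2 * u - sumK g) + g t / (2 * \<alpha> t)"
definition "GB t l g = p t / (2 * \<alpha>bar) * (1 - sumK g) + l t + g t / (2 * \<alpha> t)"

lemma Gfun_eq: "Gfun M S K \<alpha> \<eta> x t l g = \<bar>GA t g (\<eta> x t)\<bar> - GB t l g"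
  unfolding Gfun_def GA_def GB_def Let_def by simp

lemma K_pos: "1 \<le> K"
  using S_range_AE AE_False by (cases K) auto

lemma \<alpha>bar_eq: "\<alpha>bar = (\<Sum>t\<in>{1..K}. \<alpha> t * p t)"
  unfolding abar_def by (simp add: mult.commute)

lemma \<alpha>bar_pos: "\<alpha>bar > 0"
  unfolding \<alpha>bar_eq using K_pos psz_pos \<alpha>_pos by (intro sum_pos) auto

lemma GA_affine: "GA t g u = GA t g 0 - p t / \<alpha>bar * u"
  unfolding GA_def using \<alpha>bar_pos by (simp add: field_simps)

lemma eta_threshold_iff_GA_nonpos:
  assumes "t \<in> {1..K}"
  shows "1/2 + (\<alpha>bar * gam t / (\<alpha> t * p t) - sumK gam) / 2 \<le> u \<longleftrightarrow> GA t gam u \<le> 0"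
  unfolding GA_def using psz_pos[OF assms] \<alpha>_pos[OF assms] \<alpha>bar_pos by (simp add: field_simps)

lemma gstar_eq:
  assumes "t \<in> {1..K}"
  shows "gst x t = (if \<bar>GA t gam (\<eta> x t)\<bar> - GB t lam gam \<le> 0 then Rej
    else if GA t gam (\<eta> x t) \<le> 0 then L1 else L0)"
  unfolding gstar_def Let_def Gfun_eq using eta_threshold_iff_GA_nonpos[OF assms] by simp

lemma XS_measurable: "(\<lambda>w. (X w, S w)) \<in> measurable M (borel \<Otimes>\<^sub>M count_space UNIV)"
  using X_measurable by measurable

lemma eta_XS_measurable[measurable]: "eta_XS \<in> borel_measurable M"
proof -
  have "(\<lambda>(x, s). \<eta> x s) \<in> borel_measurable (borel \<Otimes>\<^sub>M count_space UNIV)"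
    using regression unfolding is_regression_def by auto
  from measurable_compose[OF XS_measurable this] show ?thesis
    unfolding eta_XS_def by simp
qed

lemma eta_XS_integrable: "integrable M eta_XS"
  using regression unfolding is_regression_def eta_XS_def by auto

lemma ev_sets[measurable]: "Measurable.pred M P \<Longrightarrow> ev M P \<in> sets M"
  unfolding ev_def by measurable

lemma ev_inter_space[simp]: "ev M P \<inter> space M = ev M P"
  unfolding ev_def by auto

lemma measurable_classifier_XS:
  assumes "is_classifier f"
  shows "(\<lambda>w. f (X w) (S w)) \<in> measurable M (count_space UNIV)"
  using measurable_compose[OF XS_measurable assms[unfolded is_classifier_def]] by simp

lemma pred_classifier_XS[measurable]:
  assumes "is_classifier f"
  shows "Measurable.pred M (\<lambda>w. f (X w) (S w) = c)"
  using measurable_classifier_XS[OF assms] by measurable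

lemma gstar_classifier: "is_classifier gst"
proof -
  define \<phi> where "\<phi> t u = (if \<bar>GA t gam u\<bar> - GB t lam gam \<le> 0 then Rej
    else if 1/2 + (\<alpha>bar * gam t / (\<alpha> t * p t) - sumK gam) / 2 \<le> u then L1 else L0)" for t u
  have [measurable]: "(\<lambda>(x, s). \<eta> x s) \<in> borel_measurable (borel \<Otimes>\<^sub>M count_space UNIV)"
    using regression unfolding is_regression_def by auto
  have "(\<lambda>(x, s). gst x s) = (\<lambda>z. \<phi> (snd z) ((\<lambda>(x, s). \<eta> x s) z))"
    by (auto simp: gstar_def Let_def Gfun_eq \<phi>_def)
  also have "\<dots> \<in> measurable (borel \<Otimes>\<^sub>M count_space UNIV) (count_space UNIV)"
    by (rule measurable_compose_countable[where g=snd]) (unfold \<phi>_def GA_def, measurable)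
  finally show ?thesis
    unfolding is_classifier_def .
qed

subsection \<open>The constraints and the risk as masses of events\<close>

definition "acc_in f t = measure M (ev M (\<lambda>w. S w = t \<and> f (X w) (S w) \<noteq> Rej))"
definition "pos_in f t = measure M (ev M (\<lambda>w. S w = t \<and> f (X w) (S w) = L1))"
definition "acc f = measure M (ev M (\<lambda>w. f (X w) (S w) \<noteq> Rej))"
definition "pos f = measure M (ev M (\<lambda>w. f (X w) (S w) = L1))"
definition "err f = measure M (ev M (\<lambda>w. (f (X w) (S w) = L1 \<and> Y w \<noteq> 1)
    \<or> (f (X w) (S w) = L0 \<and> Y w \<noteq> 0)))"

lemma NA_eq: "NA M X S f t = acc_in f t / p t"
  unfolding NA_def cprob_def acc_in_def psz_def
  by (rule arg_cong2[where f="(/)"]) (auto simp: ev_def intro!: arg_cong[where f="measure M"])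

lemma PTs_eq: "PTs M X S f t = pos_in f t / acc_in f t"
  unfolding PTs_def cprob_def acc_in_def pos_in_def
  by (rule arg_cong2[where f="(/)"]) (auto simp: ev_def intro!: arg_cong[where f="measure M"])

lemma PT_eq: "PT M X S f = pos f / acc f"
  unfolding PT_def cprob_def acc_def pos_def
  by (rule arg_cong2[where f="(/)"]) (auto simp: ev_def intro!: arg_cong[where f="measure M"])

lemma risk_eq: "risk M X S Y f = err f / acc f"
  unfolding risk_def cprob_def acc_def err_def
  by (rule arg_cong2[where f="(/)"]) (auto simp: ev_def intro!: arg_cong[where f="measure M"])

lemma sum_strata_indicator:
  assumes "w \<in> space M" "S w \<in> {1..K}"
  shows "(\<Sum>t\<in>{1..K}. c t * indicator (ev M (\<lambda>w. S w = t \<and> P w)) w) = (if P w then c (S w) else 0 :: real)"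
proof -
  have "(\<Sum>t\<in>{1..K}. c t * indicator (ev M (\<lambda>w. S w = t \<and> P w)) w)
      = (\<Sum>t\<in>{1..K}. if t = S w then (if P w then c t else 0) else 0)"
    using assms(1) by (intro sum.cong) (auto simp: ev_def indicator_def)
  then show ?thesis
    using assms(2) by simp
qed

lemma measure_ev_sum_strata:
  assumes [measurable]: "Measurable.pred M P"
  shows "measure M (ev M P) = (\<Sum>t\<in>{1..K}. measure M (ev M (\<lambda>w. S w = t \<and> P w)))"
proof -
  have "measure M (ev M P) = integral\<^sup>L M (\<lambda>w. \<Sum>t\<in>{1..K}. indicator (ev M (\<lambda>w. S w = t \<and> P w)) w)"
  proof (subst integral_cong_AE)
    show "AE w in M. (\<Sum>t\<in>{1..K}. indicator (ev M (\<lambda>w. S w = t \<and> P w)) w) = (indicator (ev M P) w :: real)"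
      using S_range_AE AE_space
      by eventually_elim (use sum_strata_indicator[where c="\<lambda>_. 1"] in \<open>auto simp: ev_def\<close>)
  qed auto
  also have "\<dots> = (\<Sum>t\<in>{1..K}. measure M (ev M (\<lambda>w. S w = t \<and> P w)))"
    by (subst Bochner_Integration.integral_sum) (auto simp: integrable_indicator_iff emeasure_eq_measure)
  finally show ?thesis .
qed

lemma acc_eq_sum: "is_classifier f \<Longrightarrow> acc f = (\<Sum>t\<in>{1..K}. acc_in f t)"
  unfolding acc_def acc_in_def by (rule measure_ev_sum_strata) measurable

context
  fixes h assumes h: "DPWA_feasible M X S K \<alpha> h"
begin

lemma feasible_classifier: "is_classifier h"
  using h unfolding DPWA_feasible_def by simp

lemma feasible_acc_in:
  assumes t: "t \<in> {1..K}"
  shows "acc_in h t = \<alpha> t * p t"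
proof -
  have "acc_in h t / p t = \<alpha> t"
    using h t unfolding DPWA_feasible_def NA_eq by simp
  then show ?thesis
    using psz_pos[OF t] by (simp add: field_simps)
qed

lemma feasible_acc: "acc h = \<alpha>bar"
  unfolding acc_eq_sum[OF feasible_classifier] \<alpha>bar_eq by (rule sum.cong) (simp_all add: feasible_acc_in)

lemma feasible_pos_in:
  assumes t: "t \<in> {1..K}"
  shows "pos_in h t = PT M X S h * (\<alpha> t * p t)"
proof -
  have "pos_in h t / (\<alpha> t * p t) = PT M X S h"
    using h t unfolding DPWA_feasible_def PTs_eq by (simp add: feasible_acc_in)
  then show ?thesis
    using psz_pos[OF t] \<alpha>_pos[OF t] by (simp add: field_simps)
qed

lemma feasible_pos: "pos h = PT M X S h * \<alpha>bar"
  using \<alpha>bar_pos unfolding PT_eq feasible_acc by simp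

end

subsection \<open>Weak duality\<close>

lemma Y_integrable: "integrable M Y"
  by (rule integrable_const_bound[where B=1]) (use Y_binary_AE in \<open>auto elim: AE_mp\<close>)

lemma integral_Y_indicator_classifier:
  assumes f: "is_classifier f"
  shows "integral\<^sup>L M (\<lambda>w. Y w * indicator (ev M (\<lambda>w. f (X w) (S w) \<in> C)) w)
       = integral\<^sup>L M (\<lambda>w. eta_XS w * indicator (ev M (\<lambda>w. f (X w) (S w) \<in> C)) w)"
proof -
  define B where "B = (\<lambda>(x, s). f x s) -` C \<inter> space (borel \<Otimes>\<^sub>M count_space UNIV)"
  have "B \<in> sets (borel \<Otimes>\<^sub>M count_space UNIV)"
    unfolding B_def using f unfolding is_classifier_def by (intro measurable_sets) auto
  then have "(LINT w:ev M (\<lambda>w. (X w, S w) \<in> B)|M. Y w) = (LINT w:ev M (\<lambda>w. (X w, S w) \<in> B)|M. eta_XS w)"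
    using regression unfolding is_regression_def eta_XS_def by blast
  moreover have "ev M (\<lambda>w. (X w, S w) \<in> B) = ev M (\<lambda>w. f (X w) (S w) \<in> C)"
    unfolding B_def ev_def by (auto simp: space_pair_measure)
  ultimately show ?thesis
    unfolding set_lebesgue_integral_def by (simp add: mult.commute)
qed

lemma err_eq:
  assumes f: "is_classifier f"
  defines "A \<equiv> ev M (\<lambda>w. f (X w) (S w) \<noteq> Rej)" and "B \<equiv> ev M (\<lambda>w. f (X w) (S w) = L1)"
  shows "err f = integral\<^sup>L M (\<lambda>w. eta_XS w * indicator A w) + pos f
     - 2 * integral\<^sup>L M (\<lambda>w. eta_XS w * indicator B w)"
proof -
  note [measurable] = pred_classifier_XS[OF f]
  have AB_sets[measurable]: "A \<in> sets M" "B \<in> sets M"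
    unfolding A_def B_def by measurable
  have "err f = integral\<^sup>L M (\<lambda>w. Y w * indicator A w + indicator B w - 2 * (Y w * indicator B w))"
    unfolding err_def
  proof (subst integral_cong_AE)
    show "AE w in M. Y w * indicator A w + indicator B w - 2 * (Y w * indicator B w) =
        indicator (ev M (\<lambda>w. (f (X w) (S w) = L1 \<and> Y w \<noteq> 1) \<or> (f (X w) (S w) = L0 \<and> Y w \<noteq> 0))) w"
      using Y_binary_AE AE_space
    proof eventually_elim
      case (elim w)
      then show ?case
        by (cases "f (X w) (S w)") (auto simp: A_def B_def ev_def indicator_def)
    qed
  qed auto
  also have "\<dots> = integral\<^sup>L M (\<lambda>w. Y w * indicator A w) + measure M B
      - 2 * integral\<^sup>L M (\<lambda>w. Y w * indicator B w)"
    using AB_sets integrable_real_mult_indicator[OF _ Y_integrable]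
    by (simp add: integrable_indicator_iff emeasure_eq_measure)
  also have "\<dots> = integral\<^sup>L M (\<lambda>w. eta_XS w * indicator A w) + pos f
      - 2 * integral\<^sup>L M (\<lambda>w. eta_XS w * indicator B w)"
    using integral_Y_indicator_classifier[OF f, of "-{Rej}"] integral_Y_indicator_classifier[OF f, of "{L1}"]
    unfolding A_def B_def pos_def by simp
  finally show ?thesis .
qed

definition "cost f w = (case f (X w) (S w) of
    Rej \<Rightarrow> 0
  | L1 \<Rightarrow> GB (S w) lam gam + GA (S w) gam (eta_XS w)
  | L0 \<Rightarrow> GB (S w) lam gam - GA (S w) gam (eta_XS w))"

lemma gstar_minimizes_cost:
  assumes "S w \<in> {1..K}"
  shows "cost gst w \<le> cost f w"
  using gstar_eq[OF assms] unfolding cost_def eta_XS_def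
  by (cases "f (X w) (S w)") (auto split: if_splits)

definition "lagrangian f w =
    eta_XS w * indicator (ev M (\<lambda>w. f (X w) (S w) \<noteq> Rej)) w / \<alpha>bar
  + indicator (ev M (\<lambda>w. f (X w) (S w) = L1)) w / \<alpha>bar
  - 2 * (eta_XS w * indicator (ev M (\<lambda>w. f (X w) (S w) = L1)) w) / \<alpha>bar
  + (\<Sum>t\<in>{1..K}. lam t / p t * indicator (ev M (\<lambda>w. S w = t \<and> f (X w) (S w) \<noteq> Rej)) w)
  + (\<Sum>t\<in>{1..K}. gam t / (\<alpha> t * p t) * indicator (ev M (\<lambda>w. S w = t \<and> f (X w) (S w) = L1)) w)
  - sumK gam / \<alpha>bar * indicator (ev M (\<lambda>w. f (X w) (S w) = L1)) w"

lemma lagrangian_eq_cost: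
  assumes "w \<in> space M" "S w \<in> {1..K}"
  shows "lagrangian f w = cost f w / p (S w)"
  using assms psz_pos[OF assms(2)] \<alpha>_pos[OF assms(2)] \<alpha>bar_pos
  unfolding lagrangian_def sum_strata_indicator[OF assms] cost_def
  by (cases "f (X w) (S w)") (simp_all add: ev_def GA_def GB_def field_simps)

lemma
  assumes f: "is_classifier f"
  shows lagrangian_integrable: "integrable M (lagrangian f)"
    and integral_lagrangian: "integral\<^sup>L M (lagrangian f) = err f / \<alpha>bar
      + (\<Sum>t\<in>{1..K}. lam t / p t * acc_in f t) + (\<Sum>t\<in>{1..K}. gam t / (\<alpha> t * p t) * pos_in f t)
      - sumK gam / \<alpha>bar * pos f"
proof -
  note [measurable] = pred_classifier_XS[OF f]
  define A where "A = ev M (\<lambda>w. f (X w) (S w) \<noteq> Rej)"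
  define B where "B = ev M (\<lambda>w. f (X w) (S w) = L1)"
  define At where "At t = ev M (\<lambda>w. S w = t \<and> f (X w) (S w) \<noteq> Rej)" for t
  define Bt where "Bt t = ev M (\<lambda>w. S w = t \<and> f (X w) (S w) = L1)" for t
  have sets[measurable]: "A \<in> sets M" "B \<in> sets M" "At t \<in> sets M" "Bt t \<in> sets M" for t
    unfolding A_def B_def At_def Bt_def by measurable
  have ind_int: "integrable M (indicator E :: 'w \<Rightarrow> real)" if "E \<in> sets M" for E
    using that by (simp add: integrable_indicator_iff emeasure_eq_measure)
  have eta_int: "integrable M (\<lambda>w. eta_XS w * indicator E w)" if "E \<in> sets M" for E
    using integrable_real_mult_indicator[OF that eta_XS_integrable] .
  note ints = eta_int ind_int sets integrable_mult_right integrable_divide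
    Bochner_Integration.integrable_sum
  have L: "lagrangian f = (\<lambda>w. eta_XS w * indicator A w / \<alpha>bar + indicator B w / \<alpha>bar
      - 2 * (eta_XS w * indicator B w) / \<alpha>bar
      + (\<Sum>t\<in>{1..K}. lam t / p t * indicator (At t) w)
      + (\<Sum>t\<in>{1..K}. gam t / (\<alpha> t * p t) * indicator (Bt t) w)
      - sumK gam / \<alpha>bar * indicator B w)"
    unfolding lagrangian_def A_def B_def At_def Bt_def ..
  show "integrable M (lagrangian f)"
    unfolding L by (intro Bochner_Integration.integrable_add Bochner_Integration.integrable_diff ints)
  have "integral\<^sup>L M (lagrangian f) = integral\<^sup>L M (\<lambda>w. eta_XS w * indicator A w) / \<alpha>bar + pos f / \<alpha>bar
      - 2 * integral\<^sup>L M (\<lambda>w. eta_XS w * indicator B w) / \<alpha>bar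
      + (\<Sum>t\<in>{1..K}. lam t / p t * acc_in f t) + (\<Sum>t\<in>{1..K}. gam t / (\<alpha> t * p t) * pos_in f t)
      - sumK gam / \<alpha>bar * pos f"
    unfolding L using eta_int[of A] eta_int[of B] ind_int[of B] ind_int[of "At t" for t] ind_int[of "Bt t" for t]
    by (simp add: Bochner_Integration.integral_add Bochner_Integration.integral_diff ints
        Bochner_Integration.integral_sum acc_in_def pos_in_def pos_def At_def Bt_def B_def)
  also have "\<dots> = err f / \<alpha>bar
      + (\<Sum>t\<in>{1..K}. lam t / p t * acc_in f t) + (\<Sum>t\<in>{1..K}. gam t / (\<alpha> t * p t) * pos_in f t)
      - sumK gam / \<alpha>bar * pos f"
    unfolding err_eq[OF f] A_def B_def by (simp add: diff_divide_distrib add_divide_distrib)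
  finally show "integral\<^sup>L M (lagrangian f) = \<dots>" .
qed

lemma integral_lagrangian_feasible:
  assumes h: "DPWA_feasible M X S K \<alpha> h"
  shows "integral\<^sup>L M (lagrangian h) = err h / \<alpha>bar + (\<Sum>t\<in>{1..K}. lam t * \<alpha> t)"
proof -
  have "(\<Sum>t\<in>{1..K}. lam t / p t * acc_in h t) = (\<Sum>t\<in>{1..K}. lam t * \<alpha> t)"
    by (rule sum.cong[OF refl]) (use psz_pos in \<open>force simp: feasible_acc_in[OF h]\<close>)
  moreover have "(\<Sum>t\<in>{1..K}. gam t / (\<alpha> t * p t) * pos_in h t) = PT M X S h * sumK gam"
    unfolding sum_distrib_left
    by (rule sum.cong[OF refl]) (use psz_pos \<alpha>_pos in \<open>force simp: feasible_pos_in[OF h]\<close>)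
  ultimately show ?thesis
    using \<alpha>bar_pos unfolding integral_lagrangian[OF feasible_classifier[OF h]] feasible_pos[OF h] by simp
qed

lemma gstar_optimal_if_feasible:
  assumes gst_feasible: "DPWA_feasible M X S K \<alpha> gst"
  shows "DPWA_optimal M X S Y K \<alpha> gst"
  unfolding DPWA_optimal_def
proof (intro conjI allI impI gst_feasible)
  fix h assume h: "DPWA_feasible M X S K \<alpha> h"
  have "integral\<^sup>L M (lagrangian gst) \<le> integral\<^sup>L M (lagrangian h)"
  proof (rule integral_mono_AE)
    show "AE w in M. lagrangian gst w \<le> lagrangian h w"
      using S_range_AE AE_space
      by eventually_elim (simp add: lagrangian_eq_cost gstar_minimizes_cost divide_right_mono psz_pos less_imp_le)
  qed (intro lagrangian_integrable gstar_classifier feasible_classifier[OF h])+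
  then show "risk M X S Y gst \<le> risk M X S Y h"
    using \<alpha>bar_pos unfolding risk_eq integral_lagrangian_feasible[OF h] integral_lagrangian_feasible[OF gst_feasible]
      feasible_acc[OF h] feasible_acc[OF gst_feasible] by (simp add: divide_right_mono)
qed

end

locale dpwa_dual_minimizer = dpwa_model +
  assumes eta_nonatomic: "\<And>s. s \<in> {1..K} \<Longrightarrow> nonatomic
      (distr (uniform_measure M (ev M (\<lambda>w. S w = s))) borel (\<lambda>w. \<eta> (X w) (S w)))"
    and dual_minimal: "\<And>l g. dual_obj M X S K \<alpha> \<eta> lam gam \<le> dual_obj M X S K \<alpha> \<eta> l g"
begin

subsection \<open>The dual objective\<close>

definition "G_at l g w = \<bar>GA (S w) g (eta_XS w)\<bar> - GB (S w) l g"

definition "dual_integrand l g w =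
    (\<Sum>t\<in>{1..K}. indicator (ev M (\<lambda>w. S w = t)) w * (max 0 (G_at l g w) / p t))"

lemma measurable_S_eta_XS[measurable]:
  assumes "\<And>t. F t \<in> borel_measurable borel"
  shows "(\<lambda>w. F (S w) (eta_XS w)) \<in> borel_measurable M"
  by (rule measurable_compose_countable[OF _ S_measurable]) (rule measurable_compose[OF eta_XS_measurable assms])

lemma G_at_measurable[measurable]: "G_at l g \<in> borel_measurable M"
  unfolding G_at_def by (rule measurable_S_eta_XS) (unfold GA_def GB_def, measurable)

lemma dual_integrand_eq:
  assumes "w \<in> space M" "S w \<in> {1..K}"
  shows "dual_integrand l g w = max 0 (G_at l g w) / p (S w)"
  using sum_strata_indicator[OF assms, of "\<lambda>t. max 0 (G_at l g w) / p t" "\<lambda>_. True"]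
  unfolding dual_integrand_def by (simp add: mult.commute)

lemma dual_integrand_term_integrable:
  assumes t: "t \<in> {1..K}"
  shows "integrable M (\<lambda>w. indicator (ev M (\<lambda>w. S w = t)) w * (max 0 (G_at l g w) / p t))"
proof -
  define C where "C w = (\<bar>GA t g 0\<bar> + \<bar>GB t l g\<bar> + p t / \<alpha>bar * \<bar>eta_XS w\<bar>) / p t" for w
  show "integrable M (\<lambda>w. indicator (ev M (\<lambda>w. S w = t)) w * (max 0 (G_at l g w) / p t))"
  proof (rule Bochner_Integration.integrable_bound)
    show "integrable M C"
      unfolding C_def using eta_XS_integrable by (intro integrable_divide integrable_add integrable_mult_right) auto
    show "AE w in M. norm (indicator (ev M (\<lambda>w. S w = t)) w * (max 0 (G_at l g w) / p t)) \<le> norm (C w)"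
    proof (rule AE_I2)
      fix w assume w: "w \<in> space M"
      have "\<bar>GA t g (eta_XS w)\<bar> \<le> \<bar>GA t g 0\<bar> + p t / \<alpha>bar * \<bar>eta_XS w\<bar>"
        using GA_affine[of t g "eta_XS w"] abs_triangle_ineq4[of "GA t g 0" "p t / \<alpha>bar * eta_XS w"]
          psz_pos[OF t] \<alpha>bar_pos by (simp add: abs_mult)
      then have "max 0 (G_at l g w) \<le> \<bar>GA t g 0\<bar> + \<bar>GB t l g\<bar> + p t / \<alpha>bar * \<bar>eta_XS w\<bar>" if "S w = t"
        unfolding G_at_def that by linarith
      then show "norm (indicator (ev M (\<lambda>w. S w = t)) w * (max 0 (G_at l g w) / p t)) \<le> norm (C w)"
        using w psz_pos[OF t] by (cases "S w = t") (auto simp: ev_def C_def divide_right_mono)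
    qed
  qed measurable
qed

lemma dual_integrand_integrable: "integrable M (dual_integrand l g)"
  unfolding dual_integrand_def by (intro Bochner_Integration.integrable_sum dual_integrand_term_integrable)

lemma dual_obj_eq: "dual_obj M X S K \<alpha> \<eta> l g = (\<Sum>t=1..K. l t * \<alpha> t) + integral\<^sup>L M (dual_integrand l g)"
proof -
  have stratum_term: "(LINT w:ev M (\<lambda>w. S w = t)|M. max 0 (Gfun M S K \<alpha> \<eta> (X w) t l g)) / p t
      = integral\<^sup>L M (\<lambda>w. indicator (ev M (\<lambda>w. S w = t)) w * (max 0 (G_at l g w) / p t))" for t
  proof -
    have "(LINT w:ev M (\<lambda>w. S w = t)|M. max 0 (Gfun M S K \<alpha> \<eta> (X w) t l g))
        = integral\<^sup>L M (\<lambda>w. indicator (ev M (\<lambda>w. S w = t)) w * max 0 (G_at l g w))"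
      unfolding set_lebesgue_integral_def
      by (intro Bochner_Integration.integral_cong) (auto simp: indicator_def ev_def Gfun_eq G_at_def eta_XS_def)
    then show ?thesis
      by simp
  qed
  have integral_sum: "integral\<^sup>L M (dual_integrand l g) = (\<Sum>t\<in>{1..K}.
      integral\<^sup>L M (\<lambda>w. indicator (ev M (\<lambda>w. S w = t)) w * (max 0 (G_at l g w) / p t)))"
    unfolding dual_integrand_def
    by (rule Bochner_Integration.integral_sum) (rule dual_integrand_term_integrable)
  show ?thesis
    unfolding dual_obj_def stratum_term integral_sum by simp
qed

subsection \<open>First-order optimality of the multipliers\<close>

lemma eta_XS_no_atom:
  assumes t: "t \<in> {1..K}"
  shows "AE w in M. \<not> (S w = t \<and> eta_XS w = u)"
proof -
  define A where "A = ev M (\<lambda>w. S w = t)"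
  have A[measurable]: "A \<in> sets M"
    unfolding A_def by measurable
  have "eta_XS \<in> measurable (uniform_measure M A) borel"
    by measurable
  moreover have "emeasure (distr (uniform_measure M A) borel eta_XS) {u} = 0"
    using eta_nonatomic[OF t] unfolding A_def eta_XS_def[abs_def] by (intro nonatomic_singleton_null) auto
  ultimately have "emeasure (uniform_measure M A) (eta_XS -` {u} \<inter> space M) = 0"
    by (simp add: emeasure_distr)
  moreover have "eta_XS -` {u} \<inter> space M \<in> sets M"
    by measurable
  ultimately have "emeasure M (A \<inter> (eta_XS -` {u} \<inter> space M)) = 0"
    using A by (simp add: emeasure_eq_measure)
  moreover have "A \<inter> (eta_XS -` {u} \<inter> space M) = ev M (\<lambda>w. S w = t \<and> eta_XS w = u)"
    unfolding A_def ev_def by auto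
  ultimately have "emeasure M (ev M (\<lambda>w. S w = t \<and> eta_XS w = u)) = 0"
    by simp
  then have "ev M (\<lambda>w. S w = t \<and> eta_XS w = u) \<in> null_sets M"
    by (intro null_setsI) measurable
  from AE_not_in[OF this] show ?thesis
    by (rule AE_mp) (auto intro!: AE_I2 simp: ev_def)
qed

text \<open>Almost surely \<open>\<eta>(X,S)\<close> avoids the finitely many values at which a hinge of the dual
  integrand has a kink; this makes the dual objective differentiable in every direction.\<close>
lemma G_nondegenerate_AE: "AE w in M. GA (S w) gam (eta_XS w) \<noteq> 0 \<and> G_at lam gam w \<noteq> 0"
proof -
  define V where "V t = (\<lambda>c. (GA t gam 0 - c) * \<alpha>bar / p t) ` {0, GB t lam gam, - GB t lam gam}" for t
  have "AE w in M. \<forall>t\<in>{1..K}. \<forall>u\<in>V t. \<not> (S w = t \<and> eta_XS w = u)"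
    unfolding V_def by (intro AE_finite_allI eta_XS_no_atom) auto
  with S_range_AE show ?thesis
  proof eventually_elim
    case (elim w)
    then have t: "S w \<in> {1..K}" and nv: "eta_XS w \<notin> V (S w)"
      by auto
    have GA_ne: "GA (S w) gam (eta_XS w) \<noteq> c" if "c \<in> {0, GB (S w) lam gam, - GB (S w) lam gam}" for c
    proof
      assume "GA (S w) gam (eta_XS w) = c"
      then have "eta_XS w = (GA (S w) gam 0 - c) * \<alpha>bar / p (S w)"
        using GA_affine[of "S w" gam "eta_XS w"] psz_pos[OF t] \<alpha>bar_pos by (simp add: field_simps)
      then show False
        using nv that unfolding V_def by blast
    qed
    from GA_ne[of 0] GA_ne[of "GB (S w) lam gam"] GA_ne[of "- GB (S w) lam gam"] show ?case
      unfolding G_at_def by (auto simp: abs_if)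
  qed
qed

text \<open>The one-sided derivative of the dual integrand at \<open>(lam, gam)\<close> in a direction that shifts
  \<open>GA\<close> by \<open>k\<close> and \<open>GB\<close> by \<open>m\<close>.\<close>
definition "dual_slope k m w = (case gst (X w) (S w) of Rej \<Rightarrow> 0 | L1 \<Rightarrow> - k - m | L0 \<Rightarrow> k - m)"

lemma dual_slope_eq:
  assumes "S w \<in> {1..K}"
  shows "dual_slope k m w = (if \<bar>GA (S w) gam (eta_XS w)\<bar> \<le> GB (S w) lam gam then 0
    else if GA (S w) gam (eta_XS w) \<le> 0 then - k - m else k - m)"
  unfolding dual_slope_def gstar_eq[OF assms] eta_XS_def by simp

lemma dual_slope_measurable[measurable]:
  "(\<lambda>w. dual_slope (k (S w)) (m (S w)) w / p (S w)) \<in> borel_measurable M"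
proof -
  note [measurable] = pred_classifier_XS[OF gstar_classifier]
  have "(\<lambda>w. dual_slope (k (S w)) (m (S w)) w / p (S w)) = (\<lambda>w.
      (if gst (X w) (S w) = Rej then 0 else if gst (X w) (S w) = L1 then - k (S w) - m (S w)
       else k (S w) - m (S w)) / p (S w))"
    by (auto simp: dual_slope_def fun_eq_iff split: outp.split)
  also have "\<dots> \<in> borel_measurable M"
    by measurable
  finally show ?thesis .
qed

lemma dual_first_order:
  fixes L G :: "real \<Rightarrow> nat \<Rightarrow> real" and c :: real and k m :: "nat \<Rightarrow> real"
  assumes L0: "L 0 = lam" and G0: "G 0 = gam"
    and lin: "\<And>\<tau>. (\<Sum>t=1..K. L \<tau> t * \<alpha> t) = (\<Sum>t=1..K. lam t * \<alpha> t) + \<tau> * c"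
    and GA_shift: "\<And>\<tau> t u. t \<in> {1..K} \<Longrightarrow> GA t (G \<tau>) u = GA t gam u + \<tau> * k t"
    and GB_shift: "\<And>\<tau> t. t \<in> {1..K} \<Longrightarrow> GB t (L \<tau>) (G \<tau>) = GB t lam gam + \<tau> * m t"
  shows "0 \<le> c + integral\<^sup>L M (\<lambda>w. dual_slope (k (S w)) (m (S w)) w / p (S w))"
proof -
  define f where "f \<tau> = dual_integrand (L \<tau>) (G \<tau>)" for \<tau>
  define C where "C = (\<Sum>t\<in>{1..K}. (\<bar>k t\<bar> + \<bar>m t\<bar>) / p t)"
  have increment: "f \<tau> w - f 0 w =
      (max 0 (\<bar>GA (S w) gam (eta_XS w) + \<tau> * k (S w)\<bar> - (GB (S w) lam gam + \<tau> * m (S w)))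
       - max 0 (\<bar>GA (S w) gam (eta_XS w)\<bar> - GB (S w) lam gam)) / p (S w)"
    if "w \<in> space M" "S w \<in> {1..K}" for \<tau> w
    using that L0 G0
    by (simp add: f_def dual_integrand_eq G_at_def GA_shift GB_shift diff_divide_distrib)
  show ?thesis
  proof (rule integral_right_derivative_nonneg[where f=f and C=C])
    show "integrable M (f \<tau>)" for \<tau>
      unfolding f_def by (rule dual_integrand_integrable)
    show "AE w in M. \<bar>f \<tau> w - f 0 w\<bar> \<le> \<tau> * C" if "0 < \<tau>" for \<tau>
      using S_range_AE AE_space
    proof eventually_elim
      case (elim w)
      then have t: "S w \<in> {1..K}"
        by simp
      have "\<bar>f \<tau> w - f 0 w\<bar> \<le> (\<bar>\<tau> * k (S w)\<bar> + \<bar>\<tau> * m (S w)\<bar>) / p (S w)"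
        unfolding increment[OF elim(2) t] abs_divide abs_of_pos[OF psz_pos[OF t]]
        by (rule divide_right_mono[OF order_trans[OF hinge_abs_diff_le]]) (use psz_pos[OF t] in auto)
      also have "\<dots> = \<tau> * ((\<bar>k (S w)\<bar> + \<bar>m (S w)\<bar>) / p (S w))"
        using \<open>0 < \<tau>\<close> by (simp add: abs_mult algebra_simps)
      also have "\<dots> \<le> \<tau> * C"
        unfolding C_def using \<open>0 < \<tau>\<close> t psz_pos
        by (intro mult_left_mono member_le_sum[where f="\<lambda>t. (\<bar>k t\<bar> + \<bar>m t\<bar>) / p t"])
          (auto intro: divide_nonneg_pos)
      finally show ?case .
    qed
    show "AE w in M. ((\<lambda>\<tau>. (f \<tau> w - f 0 w) / \<tau>) \<longlongrightarrow> dual_slope (k (S w)) (m (S w)) w / p (S w)) (at_right 0)"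
      using S_range_AE AE_space G_nondegenerate_AE
    proof eventually_elim
      case (elim w)
      then have t: "S w \<in> {1..K}"
        by simp
      from elim(3) have "GA (S w) gam (eta_XS w) \<noteq> 0" "\<bar>GA (S w) gam (eta_XS w)\<bar> \<noteq> GB (S w) lam gam"
        unfolding G_at_def by auto
      from hinge_abs_eventually_linear[OF this, of "k (S w)" "m (S w)"] eventually_at_right_less
      have "\<forall>\<^sub>F \<tau> in at_right 0. (f \<tau> w - f 0 w) / \<tau> = dual_slope (k (S w)) (m (S w)) w / p (S w)"
        by eventually_elim (simp add: increment[OF elim(2) t] dual_slope_eq[OF t])
      then show ?case
        by (rule tendsto_eventually)
    qed
    show "integral\<^sup>L M (f 0) \<le> \<tau> * c + integral\<^sup>L M (f \<tau>)" for \<tau>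
      using dual_minimal[of "L \<tau>" "G \<tau>"] lin[of \<tau>] L0 G0 unfolding dual_obj_eq f_def by simp
  qed measurable
qed

lemma sumK_fun_upd_add: "s \<in> {1..K} \<Longrightarrow> sumK (g(s := g s + x)) = sumK g + (x :: real)"
  using sum_fun_upd_add[of "{1..K}" s g x "\<lambda>_. 1"] by simp

lemma gstar_acc_in:
  assumes s: "s \<in> {1..K}"
  shows "acc_in gst s = \<alpha> s * p s"
proof -
  have "0 \<le> \<sigma> * \<alpha> s - \<sigma> * acc_in gst s / p s" for \<sigma>
  proof -
    define m where "m t = (if t = s then \<sigma> else 0)" for t
    have lin: "(\<Sum>t=1..K. (lam(s := lam s + \<sigma> * \<tau>)) t * \<alpha> t) = (\<Sum>t=1..K. lam t * \<alpha> t) + \<tau> * (\<sigma> * \<alpha> s)"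
      for \<tau>
      using sum_fun_upd_add[of "{1..K}" s lam "\<sigma> * \<tau>" \<alpha>] s by (simp add: ac_simps)
    have "0 \<le> \<sigma> * \<alpha> s + integral\<^sup>L M (\<lambda>w. dual_slope ((\<lambda>_. 0) (S w)) (m (S w)) w / p (S w))"
      by (rule dual_first_order[where L="\<lambda>\<tau>. lam(s := lam s + \<sigma> * \<tau>)" and G="\<lambda>_. gam", OF _ _ lin])
        (auto simp: GB_def m_def)
    also have "integral\<^sup>L M (\<lambda>w. dual_slope ((\<lambda>_. 0) (S w)) (m (S w)) w / p (S w))
        = integral\<^sup>L M (\<lambda>w. - \<sigma> / p s * indicator (ev M (\<lambda>w. S w = s \<and> gst (X w) (S w) \<noteq> Rej)) w)"
      by (rule Bochner_Integration.integral_cong) (auto simp: dual_slope_def m_def ev_def split: outp.split)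
    finally show ?thesis
      by (simp add: acc_in_def pred_classifier_XS[OF gstar_classifier])
  qed
  from this[of 1] this[of "-1"] show ?thesis
    using psz_pos[OF s] by (simp add: field_simps)
qed

lemma gstar_pos_in:
  assumes s: "s \<in> {1..K}"
  shows "pos_in gst s = pos gst / \<alpha>bar * (\<alpha> s * p s)"
proof -
  note [measurable] = pred_classifier_XS[OF gstar_classifier]
  have "0 \<le> \<sigma> * (pos gst / \<alpha>bar) - \<sigma> * (pos_in gst s / (\<alpha> s * p s))" for \<sigma>
  proof -
    define k where "k t = \<sigma> * ((if t = s then 1 / (2 * \<alpha> t) else 0) - p t / (2 * \<alpha>bar))" for t
    have "GA t (gam(s := gam s + \<sigma> * \<tau>)) u = GA t gam u + \<tau> * k t"
      and "GB t lam (gam(s := gam s + \<sigma> * \<tau>)) = GB t lam gam + \<tau> * k t" if "t \<in> {1..K}" for t u \<tau>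
      using \<alpha>_pos[OF that] \<alpha>bar_pos unfolding GA_def GB_def k_def sumK_fun_upd_add[OF s]
      by (cases "t = s"; simp add: field_simps)+
    then have "0 \<le> 0 + integral\<^sup>L M (\<lambda>w. dual_slope (k (S w)) (k (S w)) w / p (S w))"
      by (intro dual_first_order[where L="\<lambda>_. lam" and G="\<lambda>\<tau>. gam(s := gam s + \<sigma> * \<tau>)"]) auto
    also have "integral\<^sup>L M (\<lambda>w. dual_slope (k (S w)) (k (S w)) w / p (S w))
        = integral\<^sup>L M (\<lambda>w. \<sigma> / \<alpha>bar * indicator (ev M (\<lambda>w. gst (X w) (S w) = L1)) w
            - \<sigma> / (\<alpha> s * p s) * indicator (ev M (\<lambda>w. S w = s \<and> gst (X w) (S w) = L1)) w)"
    proof (rule integral_cong_AE)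
      show "AE w in M. dual_slope (k (S w)) (k (S w)) w / p (S w)
          = \<sigma> / \<alpha>bar * indicator (ev M (\<lambda>w. gst (X w) (S w) = L1)) w
            - \<sigma> / (\<alpha> s * p s) * indicator (ev M (\<lambda>w. S w = s \<and> gst (X w) (S w) = L1)) w"
        using S_range_AE AE_space
      proof eventually_elim
        case (elim w)
        then have "p (S w) > 0" "\<alpha> (S w) > 0"
          using psz_pos \<alpha>_pos by auto
        then have "- 2 * k (S w) / p (S w) = \<sigma> / \<alpha>bar - (if S w = s then \<sigma> / (\<alpha> s * p s) else 0)"
          using \<alpha>bar_pos unfolding k_def by (cases "S w = s") (simp_all add: field_simps)
        moreover have "dual_slope (k (S w)) (k (S w)) w = (if gst (X w) (S w) = L1 then - 2 * k (S w) else 0)"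
          by (cases "gst (X w) (S w)") (simp_all add: dual_slope_def)
        ultimately show ?case
          using elim by (simp add: ev_def indicator_def)
      qed
    qed measurable
    also have "\<dots> = \<sigma> / \<alpha>bar * pos gst - \<sigma> / (\<alpha> s * p s) * pos_in gst s"
      unfolding pos_def pos_in_def
      by (subst Bochner_Integration.integral_diff)
        (auto intro!: integrable_mult_right simp: integrable_indicator_iff emeasure_eq_measure)
    finally show ?thesis
      by simp
  qed
  from this[of 1] this[of "-1"] show ?thesis
    using psz_pos[OF s] \<alpha>_pos[OF s] by (simp add: field_simps)
qed

lemma gstar_feasible: "DPWA_feasible M X S K \<alpha> gst"
  unfolding DPWA_feasible_def
proof (intro conjI gstar_classifier ballI)
  fix t assume t: "t \<in> {1..K}"
  have acc: "acc gst = \<alpha>bar"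
    unfolding acc_eq_sum[OF gstar_classifier] \<alpha>bar_eq by (rule sum.cong) (simp_all add: gstar_acc_in)
  show "NA M X S gst t = \<alpha> t"
    using psz_pos[OF t] unfolding NA_eq gstar_acc_in[OF t] by simp
  show "PTs M X S gst t = PT M X S gst"
    using psz_pos[OF t] \<alpha>_pos[OF t] unfolding PTs_eq PT_eq gstar_acc_in[OF t] gstar_pos_in[OF t] acc by simp
qed

lemma gstar_optimal: "DPWA_optimal M X S Y K \<alpha> gst"
  by (rule gstar_optimal_if_feasible[OF gstar_feasible])

end

theorem theorem1:
  fixes M :: "'w measure" and X :: "'w \<Rightarrow> real ^ 'd" and S :: "'w \<Rightarrow> nat"
    and Y :: "'w \<Rightarrow> real" and K :: nat and \<alpha> :: "nat \<Rightarrow> real"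
    and \<eta> :: "real ^ 'd \<Rightarrow> nat \<Rightarrow> real" and lam gam :: "nat \<Rightarrow> real"
  assumes "prob_space M"
    and "X \<in> borel_measurable M"
    and "S \<in> measurable M (count_space UNIV)"
    and "Y \<in> borel_measurable M"
    and "AE w in M. S w \<in> {1..K}"
    and "AE w in M. Y w \<in> {0, 1}"
    and "\<forall>s\<in>{1..K}. psz M S s > 0"
    and "\<forall>s\<in>{1..K}. 0 < \<alpha> s \<and> \<alpha> s \<le> 1"
    and "is_regression M X S Y \<eta>"
    and "\<forall>s\<in>{1..K}. nonatomic
           (distr (uniform_measure M (ev M (\<lambda>w. S w = s))) borel (\<lambda>w. \<eta> (X w) (S w)))"
    and "\<forall>lam' gam'. dual_obj M X S K \<alpha> \<eta> lam gam \<le> dual_obj M X S K \<alpha> \<eta> lam' gam'"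
  shows "DPWA_optimal M X S Y K \<alpha> (gstar M S K \<alpha> \<eta> lam gam)"
proof -
  interpret dpwa_dual_minimizer M X S Y K \<alpha> \<eta> lam gam
    using assms by (intro dpwa_dual_minimizer.intro dpwa_model.intro dpwa_model_axioms.intro
        dpwa_dual_minimizer_axioms.intro) auto
  show ?thesis
    by (rule gstar_optimal)
qed

end
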